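(* Consider the setting described in the context, assume A1–A5, and let $s=\frac{r}{2-4r}$. For any constants $c>0$ and $C>0$ there is $\gamma>0$ such that, whenever $f_n=\sum_{j=1}^{ck_n}\theta_{nj}\phi_j$ and $\|f_n\|\le Cn^{-r}$, one has $f_n\in\bar{\mathbb{B}}^s_{2\infty}(\gamma)$.
   Context: Fix $\sigma>0$, $0<r<1/2$ and an orthonormal basis $(\phi_j)_{j\ge1}$ of $\mathbb{L}_2(0,1)$. For each $n$ nonnegative weights $\kappa_{nj}^2$ are given with $\rho_n=\sum_j\kappa_{nj}^2<\infty$; $k_n=\sup\{k:\sum_{j<k}\kappa_{nj}^2\le\rho_n/2\}$ and $\kappa_n^2=\kappa_{nk_n}^2$. Assumptions: (A1) $j\mapsto\kappa_{nj}^2$ decreasing; (A2) $C_1<\sigma^{-4}n^2\sum_j\kappa_{nj}^4<C_2$ for all $n$; (A3) $c_1n^{-2r}\le\rho_n\le c_2n^{-2r}$; (A4) $\exists C_1>0,\lambda>1$: $\kappa^2_{n,[(1+\delta)k_n]}<C_1(1+\delta)^{-\lambda}\kappa_n^2$ for all $\delta>0,n$; (A5) $\kappa_{n1}^2\asymp\kappa_n^2$ and for each $c>1$ there is $C>0$ with $\kappa^2_{n,[ck_n]}\ge C\kappa_n^2$. $\bar{\mathbb{B}}^s_{2\infty}(P_0)=\{f=\sum_j\theta_j\phi_j:\ \sup_{\lambda>0}\lambda^{2s}\sum_{j>\lambda}\theta_j^2\le P_0\}$. *)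

theory Defs
  imports "HOL-Analysis.Analysis"
begin

text \<open>Weights: kap n j stands for the squared weight kappa_{nj}^2, indices j >= 1
  (the value at j = 0 is irrelevant).  Functions f = sum_j theta_j phi_j are identified
  with their coefficient sequences theta (j >= 1) w.r.t. the fixed orthonormal basis.\<close>

definition rho :: "(nat \<Rightarrow> nat \<Rightarrow> real) \<Rightarrow> nat \<Rightarrow> real" where
  "rho kap n = (\<Sum>j. kap n (Suc j))"

definition kn :: "(nat \<Rightarrow> nat \<Rightarrow> real) \<Rightarrow> nat \<Rightarrow> nat" where
  "kn kap n = Sup {k. (\<Sum>j\<in>{1..<k}. kap n j) \<le> rho kap n / 2}"

definition kappa_n2 :: "(nat \<Rightarrow> nat \<Rightarrow> real) \<Rightarrow> nat \<Rightarrow> real" where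
  "kappa_n2 kap n = kap n (kn kap n)"

definition coef_norm :: "(nat \<Rightarrow> real) \<Rightarrow> real" where
  "coef_norm \<theta> = sqrt (\<Sum>j. (\<theta> (Suc j))\<^sup>2)"

definition besov_ball :: "real \<Rightarrow> real \<Rightarrow> (nat \<Rightarrow> real) \<Rightarrow> bool" where
  "besov_ball s P0 \<theta> \<longleftrightarrow> summable (\<lambda>j. (\<theta> (Suc j))\<^sup>2) \<and>
     (\<forall>t>0. t powr (2 * s) * (\<Sum>j. if real j > t then (\<theta> j)\<^sup>2 else 0) \<le> P0)"

end

theory Submission
  imports Defs
begin

(* For weights decreasing in j, k kappa_{nk}^2 <= rho_n for every index k, and
   sum_j kappa_{nj}^4 <= kappa_{n1}^2 rho_n.  Taking k = k_n and kappa_{n1}^2 <= b kappa_n^2 (A5)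
   gives k_n sum_j kappa_{nj}^4 <= b rho_n^2, so the lower bound of A2 and the upper bound of A3
   yield k_n = O(n^(2-4r)).  For f supported on j <= c k_n, the Besov tail
   t^(2s) sum_{j>t} theta_j^2 vanishes when t >= c k_n and is otherwise at most
   (c k_n)^(2s) ||f||^2 = O(n^(2s(2-4r)) n^(-2r)) = O(1), because 2s(2-4r) = 2r. *)

lemma decseq_term_mult_le_suminf:
  fixes f :: "nat \<Rightarrow> real"
  assumes dec: "decseq f" and nonneg: "\<And>j. 0 \<le> f j" and summ: "summable f"
  shows "real (Suc k) * f k \<le> suminf f"
proof -
  have "real (Suc k) * f k = (\<Sum>j\<le>k. f k)" by simp
  also have "\<dots> \<le> (\<Sum>j\<le>k. f j)" using dec by (intro sum_mono) (simp add: decseqD)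
  also have "\<dots> \<le> suminf f" using summ nonneg by (intro sum_le_suminf) auto
  finally show ?thesis .
qed

lemma decseq_suminf_power2_le:
  fixes f :: "nat \<Rightarrow> real"
  assumes dec: "decseq f" and nonneg: "\<And>j. 0 \<le> f j" and summ: "summable f"
  shows "summable (\<lambda>j. (f j)\<^sup>2)" and "(\<Sum>j. (f j)\<^sup>2) \<le> f 0 * suminf f"
proof -
  have sq_le: "(f j)\<^sup>2 \<le> f 0 * f j" for j
    using decseqD[OF dec, of 0 j] nonneg[of j] by (simp add: power2_eq_square mult_right_mono)
  have summ_mult: "summable (\<lambda>j. f 0 * f j)" using summ by (rule summable_mult)
  show summ_sq: "summable (\<lambda>j. (f j)\<^sup>2)"
    by (rule summable_comparison_test[OF _ summ_mult]) (use sq_le in auto)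
  have "(\<Sum>j. (f j)\<^sup>2) \<le> (\<Sum>j. f 0 * f j)" by (rule suminf_le[OF sq_le summ_sq summ_mult])
  then show "(\<Sum>j. (f j)\<^sup>2) \<le> f 0 * suminf f" using suminf_mult[OF summ] by simp
qed

lemma decseq_Suc_mult_suminf_power2_le:
  fixes f :: "nat \<Rightarrow> real"
  assumes dec: "decseq f" and nonneg: "\<And>j. 0 \<le> f j" and summ: "summable f"
    and b: "0 \<le> b" "f 0 \<le> b * f k"
  shows "real (Suc k) * (\<Sum>j. (f j)\<^sup>2) \<le> b * (suminf f)\<^sup>2"
proof -
  have sum_nonneg: "0 \<le> suminf f" using summ nonneg by (rule suminf_nonneg)
  have "real (Suc k) * (\<Sum>j. (f j)\<^sup>2) \<le> real (Suc k) * (f 0 * suminf f)"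
    using decseq_suminf_power2_le[OF dec nonneg summ] by (intro mult_left_mono) auto
  also have "\<dots> \<le> real (Suc k) * (b * f k * suminf f)"
    using b sum_nonneg by (intro mult_left_mono mult_right_mono) auto
  also have "\<dots> = b * suminf f * (real (Suc k) * f k)" by simp
  also have "\<dots> \<le> b * suminf f * suminf f"
    using decseq_term_mult_le_suminf[OF dec nonneg summ] b sum_nonneg by (intro mult_left_mono) auto
  finally show ?thesis by (simp add: power2_eq_square mult.assoc)
qed

lemma weights_index_mult_suminf_power2_le:
  fixes a :: "nat \<Rightarrow> real"
  assumes nonneg: "\<And>j. 1 \<le> j \<Longrightarrow> 0 \<le> a j"
    and summ: "summable (\<lambda>j. a (Suc j))"
    and antimono: "\<And>j. 1 \<le> j \<Longrightarrow> a (Suc j) \<le> a j"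
    and b: "0 \<le> b" "a 1 \<le> b * a k"
  shows "real k * (\<Sum>j. (a (Suc j))\<^sup>2) \<le> b * (\<Sum>j. a (Suc j))\<^sup>2"
proof (cases k)
  case 0
  then show ?thesis using b by simp
next
  case (Suc i)
  have "decseq (\<lambda>j. a (Suc j))" by (rule decseq_SucI) (simp add: antimono)
  then show ?thesis
    using decseq_Suc_mult_suminf_power2_le[of "\<lambda>j. a (Suc j)" b i] Suc nonneg summ b by simp
qed

lemma weights_index_le_power:
  fixes kap :: "nat \<Rightarrow> nat \<Rightarrow> real" and \<sigma> C1 b c2 r :: real
  assumes n: "1 \<le> n" and sigma: "0 < \<sigma>"
    and nonneg: "\<And>j. 1 \<le> j \<Longrightarrow> 0 \<le> kap n j"
    and summ: "summable (\<lambda>j. kap n (Suc j))"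
    and antimono: "\<And>j. 1 \<le> j \<Longrightarrow> kap n (Suc j) \<le> kap n j"
    and C1: "0 < C1" "C1 < \<sigma> powr (-4) * (real n)\<^sup>2 * (\<Sum>j. (kap n (Suc j))\<^sup>2)"
    and b: "0 < b" "kap n 1 \<le> b * kap n k"
    and c2: "rho kap n \<le> c2 * real n powr (-2*r)"
  shows "real k \<le> b * c2\<^sup>2 / (C1 * \<sigma> powr 4) * real n powr (2 - 4*r)"
proof -
  define S where "S = (\<Sum>j. (kap n (Suc j))\<^sup>2)"
  have npos: "0 < real n" using n by simp
  have rho_nonneg: "0 \<le> rho kap n" unfolding rho_def using summ nonneg by (intro suminf_nonneg) auto
  have "(rho kap n)\<^sup>2 \<le> (c2 * real n powr (-2*r))\<^sup>2" using rho_nonneg c2 by (intro power_mono)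
  also have "\<dots> = c2\<^sup>2 * real n powr (-4*r)"
    using npos by (simp add: power_mult_distrib powr_realpow[symmetric] powr_powr)
  finally have rho_sq: "(rho kap n)\<^sup>2 \<le> c2\<^sup>2 * real n powr (-4*r)" .
  have "C1 < (real n)\<^sup>2 * S / \<sigma> powr 4"
    using C1(2) sigma unfolding S_def by (simp add: powr_minus divide_inverse mult_ac)
  then have "C1 * \<sigma> powr 4 < (real n)\<^sup>2 * S"
    using sigma by (simp add: pos_less_divide_eq)
  then have "real k * (C1 * \<sigma> powr 4) \<le> real k * ((real n)\<^sup>2 * S)"
    by (intro mult_left_mono) auto
  also have "\<dots> = (real n)\<^sup>2 * (real k * S)" by simp
  also have "\<dots> \<le> (real n)\<^sup>2 * (b * (c2\<^sup>2 * real n powr (-4*r)))"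
  proof -
    have "real k * S \<le> b * (rho kap n)\<^sup>2"
      unfolding S_def rho_def using b
      by (intro weights_index_mult_suminf_power2_le[of "kap n", OF nonneg summ antimono]) auto
    also have "\<dots> \<le> b * (c2\<^sup>2 * real n powr (-4*r))" using b rho_sq by (intro mult_left_mono) auto
    finally show ?thesis by (intro mult_left_mono) auto
  qed
  also have "\<dots> = b * c2\<^sup>2 * real n powr (2 - 4*r)"
    using npos by (simp add: powr_diff powr_minus divide_inverse)
  finally show ?thesis using C1(1) sigma by (simp add: field_simps)
qed

lemma besov_ball_if_support_le:
  fixes \<theta> :: "nat \<Rightarrow> real"
  assumes supp: "\<And>j. M < real j \<Longrightarrow> \<theta> j = 0" and s: "0 \<le> s"
    and norm: "coef_norm \<theta> \<le> B" and bound: "M powr (2 * s) * B\<^sup>2 \<le> P0"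
  shows "besov_ball s P0 \<theta>"
  unfolding besov_ball_def
proof (intro conjI allI impI)
  have supp_finite: "\<theta> j = 0" if "nat \<lceil>M\<rceil> < j" for j
  proof -
    have "M \<le> real (nat \<lceil>M\<rceil>)" by (rule real_nat_ceiling_ge)
    with that show ?thesis using supp by (metis le_less_trans of_nat_less_iff)
  qed
  show summ: "summable (\<lambda>j. (\<theta> (Suc j))\<^sup>2)"
    by (rule summable_finite[of "{..nat \<lceil>M\<rceil>}"]) (auto intro: supp_finite)
  have norm_sq: "(\<Sum>j. (\<theta> (Suc j))\<^sup>2) \<le> B\<^sup>2"
  proof -
    have nonneg: "0 \<le> (\<Sum>j. (\<theta> (Suc j))\<^sup>2)" using summ by (intro suminf_nonneg) auto
    then have "(\<Sum>j. (\<theta> (Suc j))\<^sup>2) = (coef_norm \<theta>)\<^sup>2" unfolding coef_norm_def by simp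
    also have "\<dots> \<le> B\<^sup>2" using norm nonneg by (intro power_mono) (auto simp: coef_norm_def)
    finally show ?thesis .
  qed
  fix t :: real assume t: "0 < t"
  define g where "g = (\<lambda>j::nat. if t < real j then (\<theta> j)\<^sup>2 else 0)"
  have summ_g: "summable g"
    by (rule summable_finite[of "{..nat \<lceil>M\<rceil>}"]) (auto simp: g_def supp_finite)
  have tail_nonneg: "0 \<le> suminf g" using summ_g by (intro suminf_nonneg) (auto simp: g_def)
  show "t powr (2 * s) * suminf g \<le> P0"
  proof (cases "M \<le> t")
    case True
    then have "g = (\<lambda>_. 0)" using supp by (auto simp: g_def)
    then show ?thesis using bound by (simp add: order_trans[OF _ bound])
  next
    case False
    have "suminf g = (\<Sum>j. g (Suc j))" using suminf_split_head[OF summ_g] t by (simp add: g_def)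
    also have "\<dots> \<le> (\<Sum>j. (\<theta> (Suc j))\<^sup>2)"
    proof (rule suminf_le[OF _ _ summ])
      show "summable (\<lambda>j. g (Suc j))" using summ_g by (subst summable_Suc_iff)
    qed (simp add: g_def)
    finally have "suminf g \<le> B\<^sup>2" using norm_sq by linarith
    moreover have "t powr (2 * s) \<le> M powr (2 * s)" using False t s by (intro powr_mono2) auto
    ultimately have "t powr (2 * s) * suminf g \<le> M powr (2 * s) * B\<^sup>2"
      using tail_nonneg by (intro mult_mono) auto
    with bound show ?thesis by linarith
  qed
qed

lemma powr_mult_power2_le_cancel:
  fixes c K D y C :: real
  assumes cK: "0 \<le> c" "0 \<le> K" "K \<le> D * y powr a" and y: "0 < y" and p: "0 \<le> p" "a * p = 2 * q"
  shows "(c * K) powr p * (C * y powr (-q))\<^sup>2 \<le> (c * D) powr p * C\<^sup>2"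
proof -
  have "(y powr (-q))\<^sup>2 = y powr (- (2 * q))"
    by (simp add: power2_eq_square powr_add[symmetric])
  then have square: "(C * y powr (-q))\<^sup>2 = C\<^sup>2 * y powr (- (2 * q))" by (simp add: power_mult_distrib)
  have "0 \<le> D * y powr a" using cK by linarith
  then have "0 \<le> D" using y by (simp add: zero_le_mult_iff)
  have "(c * K) powr p \<le> (c * D * y powr a) powr p"
    using cK p by (intro powr_mono2) (auto simp: mult.assoc intro: mult_left_mono)
  also have "\<dots> = (c * D) powr p * y powr (2 * q)"
    using cK y p \<open>0 \<le> D\<close> by (simp add: powr_mult powr_powr)
  finally have "(c * K) powr p * (C * y powr (-q))\<^sup>2
      \<le> (c * D) powr p * y powr (2 * q) * (C\<^sup>2 * y powr (- (2 * q)))"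
    unfolding square by (rule mult_right_mono) simp
  also have "\<dots> = (c * D) powr p * C\<^sup>2 * (y powr (2 * q) * y powr (- (2 * q)))"
    by (simp only: mult_ac)
  also have "\<dots> = (c * D) powr p * C\<^sup>2"
    using y by (simp add: powr_add[symmetric])
  finally show ?thesis .
qed

theorem lemma3:
  fixes \<sigma> r :: real and kap :: "nat \<Rightarrow> nat \<Rightarrow> real"
  assumes sigma: "\<sigma> > 0" and r: "0 < r" "r < 1/2"
    and nonneg: "\<And>n j. 1 \<le> n \<Longrightarrow> 1 \<le> j \<Longrightarrow> 0 \<le> kap n j"
    and summ: "\<And>n. 1 \<le> n \<Longrightarrow> summable (\<lambda>j. kap n (Suc j))"
    and A1: "\<And>n j. 1 \<le> n \<Longrightarrow> 1 \<le> j \<Longrightarrow> kap n (Suc j) \<le> kap n j"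
    and A2: "\<exists>C1 C2. 0 < C1 \<and> (\<forall>n\<ge>1. C1 < \<sigma> powr (-4) * (real n)\<^sup>2 * (\<Sum>j. (kap n (Suc j))\<^sup>2)
                 \<and> \<sigma> powr (-4) * (real n)\<^sup>2 * (\<Sum>j. (kap n (Suc j))\<^sup>2) < C2)"
    and A3: "\<exists>c1 c2. 0 < c1 \<and> 0 < c2 \<and> (\<forall>n\<ge>1. c1 * real n powr (-2*r) \<le> rho kap n
                 \<and> rho kap n \<le> c2 * real n powr (-2*r))"
    and A4: "\<exists>C1 lam. C1 > 0 \<and> lam > 1 \<and> (\<forall>\<delta>>0. \<forall>n\<ge>1.
                 kap n (nat \<lfloor>(1 + \<delta>) * real (kn kap n)\<rfloor>) < C1 * (1 + \<delta>) powr (-lam) * kappa_n2 kap n)"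
    and A5a: "\<exists>a b. 0 < a \<and> 0 < b \<and> (\<forall>n\<ge>1. a * kappa_n2 kap n \<le> kap n 1 \<and> kap n 1 \<le> b * kappa_n2 kap n)"
    and A5b: "\<And>c. c > 1 \<Longrightarrow> \<exists>C>0. \<forall>n\<ge>1. kap n (nat \<lfloor>c * real (kn kap n)\<rfloor>) \<ge> C * kappa_n2 kap n"
  shows "\<forall>c>0. \<forall>C>0. \<exists>\<gamma>>0. \<forall>n\<ge>1. \<forall>\<theta> :: nat \<Rightarrow> real.
           (\<forall>j. real j > c * real (kn kap n) \<longrightarrow> \<theta> j = 0) \<and>
           coef_norm \<theta> \<le> C * real n powr (-r)
           \<longrightarrow> besov_ball (r / (2 - 4*r)) \<gamma> \<theta>"
proof -
  obtain C1 where C1: "0 < C1" "\<forall>n\<ge>1. C1 < \<sigma> powr (-4) * (real n)\<^sup>2 * (\<Sum>j. (kap n (Suc j))\<^sup>2)"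
    using A2 by blast
  obtain c2 where c2: "0 < c2" "\<forall>n\<ge>1. rho kap n \<le> c2 * real n powr (-2*r)"
    using A3 by blast
  obtain b where b: "0 < b" "\<forall>n\<ge>1. kap n 1 \<le> b * kappa_n2 kap n"
    using A5a by blast
  define D where "D = b * c2\<^sup>2 / (C1 * \<sigma> powr 4)"
  define s where "s = r / (2 - 4*r)"
  have "0 < s" "(2 - 4*r) * (2 * s) = 2 * r" using r by (auto simp: s_def field_simps)
  have besov: "besov_ball s ((c * D) powr (2 * s) * C\<^sup>2) \<theta>"
    if c: "0 < c" and n: "1 \<le> n" and supp: "\<forall>j. real j > c * real (kn kap n) \<longrightarrow> \<theta> j = 0"
      and norm: "coef_norm \<theta> \<le> C * real n powr (-r)" for c C n \<theta>
  proof (rule besov_ball_if_support_le)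
    have "real (kn kap n) \<le> D * real n powr (2 - 4*r)"
      unfolding D_def using n C1 b c2
      by (intro weights_index_le_power[OF n sigma nonneg summ A1]) (auto simp: kappa_n2_def)
    then show "(c * real (kn kap n)) powr (2 * s) * (C * real n powr (-r))\<^sup>2 \<le> (c * D) powr (2 * s) * C\<^sup>2"
      using c n \<open>0 < s\<close> \<open>(2 - 4*r) * (2 * s) = 2 * r\<close> by (intro powr_mult_power2_le_cancel) auto
  qed (use supp norm \<open>0 < s\<close> in auto)
  have pos: "0 < (c * D) powr (2 * s) * C\<^sup>2" if "0 < c" "0 < C" for c C
    using that C1 c2 b sigma by (simp add: D_def)
  show ?thesis
    unfolding s_def[symmetric]
    apply (intro allI impI)
    subgoal for c C
      by (intro exI[of _ "(c * D) powr (2 * s) * C\<^sup>2"] conjI allI impI pos besov) auto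
    done
qed

end
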